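(* Consider the fully discrete implicit variable-step BDF2 scheme described in the context. Suppose the adjacent time-step ratios satisfy $r_k\le r_s$ for $2\le k\le N$ and the time steps satisfy $\tau_n<\frac{4\delta(1+2r_n)}{1+r_n}$ for $1\le n\le N$ (with $r_1:=0$). Then for each $n$, $1\le n\le N$, given $u_h^{0},\dots,u_h^{n-1}$, the scheme has a unique solution $u_h^n\in\mathbb{V}_h$.
   Context: Let $L>0$, $\Omega=(0,L)^2$, $M$ a positive integer, $h=L/M$, $x_i=ih$, $y_j=jh$, $\Omega_h=\{(x_i,y_j):1\le i,j\le M\}$, $\bar\Omega_h=\{(x_i,y_j):0\le i,j\le M\}$, and $\mathbb{V}_h$ the space of grid functions on $\bar\Omega_h$ that are $L$-periodic in each direction. For $v\in\mathbb{V}_h$: $\delta_x v_{i+1/2,j}=(v_{i+1,j}-v_{ij})/h$, $\Delta_x v_{ij}=(v_{i+1,j}-v_{i-1,j})/(2h)$, $\delta_x^2 v_{ij}=(\delta_xv_{i+1/2,j}-\delta_xv_{i-1/2,j})/h$, and analogously in $y$; $\Delta_h=\delta_x^2+\delta_y^2$, $\nabla_h v_{ij}=(\Delta_x v_{ij},\Delta_y v_{ij})^T$, and for a vector grid function $\mathbf{g}=(g_1,g_2)$, $\nabla_h\cdot \mathbf g=\Delta_x g_1+\Delta_y g_2$. Inner product $\langle v,w\rangle=h^2\sum_{\mathrm{x}_h\in\Omega_h}v_hw_h$, $\|v\|=\sqrt{\langle v,v\rangle}$. Let $f(\mathbf{v})=(|\mathbf v|^2-1)\mathbf v$ and $\delta>0$.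 Time levels $0=t_0<t_1<\dots<t_N=T$, $\tau_n=t_n-t_{n-1}$, $r_n=\tau_n/\tau_{n-1}$ ($2\le n\le N$), and $\nabla_\tau v^n=v^n-v^{n-1}$. BDF2 kernels: $b_0^{(1)}=2/\tau_1$, and for $n\ge2$, $b_0^{(n)}=\frac{1+2r_n}{\tau_n(1+r_n)}$, $b_1^{(n)}=-\frac{r_n^2}{\tau_n(1+r_n)}$, $b_j^{(n)}=0$ for $j\ge2$; $D_2v^n=\sum_{k=1}^n b_{n-k}^{(n)}\nabla_\tau v^k$. The scheme is: $D_2u_h^n+\delta\Delta_h^2u_h^n-\nabla_h\cdot f(\nabla_hu_h^n)=0$ for $\mathrm{x}_h\in\Omega_h$, $1\le n\le N$, with $u_h^0=\varphi_0(\mathrm{x}_h)-\frac{\tau_1}{2}\varphi_1(\mathrm{x}_h)$, $\varphi_1=\nabla\cdot f(\nabla\varphi_0)-\delta\Delta^2\varphi_0$ for given periodic smooth data $\varphi_0\in H^4(\Omega)$. $r_s$ is a fixed constant with $0<r_s<4.864$ (the step-ratio threshold under which the BDF2 kernels are positive definite). *)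

theory Defs
  imports Complex_Main
begin

type_synonym grid = "int \<Rightarrow> int \<Rightarrow> real"

text \<open>Space V_h of grid functions that are periodic (period M in index, i.e. L in space)
  in each direction, extended to all integer indices.\<close>
definition Vh :: "nat \<Rightarrow> grid set" where
  "Vh M = {v. \<forall>i j. v (i + int M) j = v i j \<and> v i (j + int M) = v i j}"

text \<open>Forward differences: dx_half h v i j is delta_x v at (i+1/2, j).\<close>
definition dx_half :: "real \<Rightarrow> grid \<Rightarrow> grid" where
  "dx_half h v i j = (v (i+1) j - v i j) / h"
definition dy_half :: "real \<Rightarrow> grid \<Rightarrow> grid" where
  "dy_half h v i j = (v i (j+1) - v i j) / h"

definition Dx :: "real \<Rightarrow> grid \<Rightarrow> grid" where
  "Dx h v i j = (v (i+1) j - v (i-1) j) / (2*h)"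
definition Dy :: "real \<Rightarrow> grid \<Rightarrow> grid" where
  "Dy h v i j = (v i (j+1) - v i (j-1)) / (2*h)"

definition dxx :: "real \<Rightarrow> grid \<Rightarrow> grid" where
  "dxx h v i j = (dx_half h v i j - dx_half h v (i-1) j) / h"
definition dyy :: "real \<Rightarrow> grid \<Rightarrow> grid" where
  "dyy h v i j = (dy_half h v i j - dy_half h v i (j-1)) / h"
definition lap_h :: "real \<Rightarrow> grid \<Rightarrow> grid" where
  "lap_h h v i j = dxx h v i j + dyy h v i j"

definition grad_h :: "real \<Rightarrow> grid \<Rightarrow> int \<Rightarrow> int \<Rightarrow> real \<times> real" where
  "grad_h h v i j = (Dx h v i j, Dy h v i j)"
definition div_h :: "real \<Rightarrow> (int \<Rightarrow> int \<Rightarrow> real \<times> real) \<Rightarrow> grid" where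
  "div_h h g i j = Dx h (\<lambda>a b. fst (g a b)) i j + Dy h (\<lambda>a b. snd (g a b)) i j"

definition fnl :: "real \<times> real \<Rightarrow> real \<times> real" where
  "fnl p = ((fst p ^ 2 + snd p ^ 2 - 1) * fst p, (fst p ^ 2 + snd p ^ 2 - 1) * snd p)"

definition tau :: "(nat \<Rightarrow> real) \<Rightarrow> nat \<Rightarrow> real" where
  "tau t n = t n - t (n - 1)"
definition ratio :: "(nat \<Rightarrow> real) \<Rightarrow> nat \<Rightarrow> real" where
  "ratio t n = (if n \<ge> 2 then tau t n / tau t (n - 1) else 0)"

definition bker :: "(nat \<Rightarrow> real) \<Rightarrow> nat \<Rightarrow> nat \<Rightarrow> real" where
  "bker t n j =
     (if n = 1 then (if j = 0 then 2 / tau t 1 else 0)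
      else if j = 0 then (1 + 2 * ratio t n) / (tau t n * (1 + ratio t n))
      else if j = 1 then - (ratio t n ^ 2) / (tau t n * (1 + ratio t n))
      else 0)"

definition D2 :: "(nat \<Rightarrow> real) \<Rightarrow> (nat \<Rightarrow> grid) \<Rightarrow> nat \<Rightarrow> grid" where
  "D2 t u n i j = (\<Sum>k = 1..n. bker t n (n - k) * (u k i j - u (k - 1) i j))"

definition scheme_at :: "real \<Rightarrow> nat \<Rightarrow> real \<Rightarrow> (nat \<Rightarrow> real) \<Rightarrow> (nat \<Rightarrow> grid) \<Rightarrow> nat \<Rightarrow> bool" where
  "scheme_at L M \<delta> t u n \<longleftrightarrow>
     (let h = L / real M in
      \<forall>i \<in> {1..int M}. \<forall>j \<in> {1..int M}.
        D2 t u n i j + \<delta> * lap_h h (lap_h h (u n)) i j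
        - div_h h (\<lambda>a b. fnl (grad_h h (u n) a b)) i j = 0)"

end

theory Submission
  imports Defs "HOL-Analysis.Analysis"
begin

(* With b = b_0^(n) and c collecting the known levels, step n of the scheme reads
   b w + c + delta Lap_h^2 w - div_h f(grad_h w) = 0 on the periodic grid. Summation by parts
   makes this the Euler-Lagrange equation of the energy
     E(w) = sum b/2 w^2 + c w + delta/2 (Lap_h w)^2 + (|grad_h w|^2 - 1)^2 / 4,
   which is continuous and coercive, so a minimiser exists and solves the scheme.
   For uniqueness, f(p) + p is monotone, (f p - f q).(p - q) >= -|p - q|^2, and
   |grad_h e|^2 <= -<e, Lap_h e> <= delta |Lap_h e|^2 + |e|^2 / (4 delta); testing the difference
   of two solutions with e = w1 - w2 gives (b - 1/(4 delta)) |e|^2 <= 0. The step-size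
   restriction is exactly b > 1/(4 delta). *)

section \<open>Periodic grid functions\<close>

lemma VhI: "(\<And>i j. v (i + int M) j = v i j) \<Longrightarrow> (\<And>i j. v i (j + int M) = v i j) \<Longrightarrow> v \<in> Vh M"
  by (simp add: Vh_def)

lemma Vh_periodic_x: "v \<in> Vh M \<Longrightarrow> v (i + int M) j = v i j"
  and Vh_periodic_y: "v \<in> Vh M \<Longrightarrow> v i (j + int M) = v i j"
  by (simp_all add: Vh_def)

lemma Vh_periodic_x_shift: "v \<in> Vh M \<Longrightarrow> v (i + int M + k) j = v (i + k) j"
  using Vh_periodic_x[of v M "i + k" j] by (simp add: algebra_simps)

lemma Vh_periodic_x_shift': "v \<in> Vh M \<Longrightarrow> v (i + int M - k) j = v (i - k) j"
  using Vh_periodic_x[of v M "i - k" j] by (simp add: algebra_simps)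

lemma Vh_periodic_y_shift: "v \<in> Vh M \<Longrightarrow> v i (j + int M + k) = v i (j + k)"
  using Vh_periodic_y[of v M i "j + k"] by (simp add: algebra_simps)

lemma Vh_periodic_y_shift': "v \<in> Vh M \<Longrightarrow> v i (j + int M - k) = v i (j - k)"
  using Vh_periodic_y[of v M i "j - k"] by (simp add: algebra_simps)

lemmas Vh_periodic = Vh_periodic_x Vh_periodic_y Vh_periodic_x_shift Vh_periodic_x_shift'
  Vh_periodic_y_shift Vh_periodic_y_shift'

lemma Vh_shift: "v \<in> Vh M \<Longrightarrow> (\<lambda>i j. v (i + a) (j + b)) \<in> Vh M"
  by (intro VhI) (simp_all add: Vh_periodic)

lemma Vh_comp: "v \<in> Vh M \<Longrightarrow> (\<lambda>i j. F (v i j)) \<in> Vh M"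
  by (intro VhI) (simp_all add: Vh_periodic)

lemma Vh_comp2: "v \<in> Vh M \<Longrightarrow> w \<in> Vh M \<Longrightarrow> (\<lambda>i j. F (v i j) (w i j)) \<in> Vh M"
  by (intro VhI) (simp_all add: Vh_periodic)

lemma Vh_dx_half: "v \<in> Vh M \<Longrightarrow> dx_half h v \<in> Vh M"
  by (intro VhI) (simp_all add: Vh_periodic dx_half_def)

lemma Vh_dy_half: "v \<in> Vh M \<Longrightarrow> dy_half h v \<in> Vh M"
  by (intro VhI) (simp_all add: Vh_periodic dy_half_def)

lemma Vh_Dx: "v \<in> Vh M \<Longrightarrow> Dx h v \<in> Vh M"
  by (intro VhI) (simp_all add: Vh_periodic Dx_def)

lemma Vh_Dy: "v \<in> Vh M \<Longrightarrow> Dy h v \<in> Vh M"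
  by (intro VhI) (simp_all add: Vh_periodic Dy_def)

lemma Vh_lap_h: "v \<in> Vh M \<Longrightarrow> lap_h h v \<in> Vh M"
  by (intro VhI) (simp_all add: Vh_periodic lap_h_def dxx_def dyy_def dx_half_def dy_half_def)

lemma periodic_add_mult:
  fixes f :: "int \<Rightarrow> 'a"
  assumes "\<And>i. f (i + p) = f i"
  shows "f (i + p * k) = f i"
proof (induction k rule: int_induct[where k = 0])
  case (step1 k)
  then show ?case using assms[of "i + p * k"] by (simp add: algebra_simps)
next
  case (step2 k)
  then show ?case using assms[of "i + p * (k - 1)"] by (simp add: algebra_simps)
qed simp

definition wrap :: "nat \<Rightarrow> int \<Rightarrow> int" where
  "wrap M i = (i - 1) mod int M + 1"

lemma wrap_in: "M > 0 \<Longrightarrow> wrap M i \<in> {1..int M}"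
  by (simp add: wrap_def) (smt (verit) of_nat_0_less_iff pos_mod_bound pos_mod_sign)

lemma wrap_id: "i \<in> {1..int M} \<Longrightarrow> wrap M i = i"
  by (simp add: wrap_def)

lemma wrap_add_period: "wrap M (i + int M) = wrap M i"
proof -
  have "(i + int M - 1) mod int M = ((i - 1) + int M) mod int M" by (simp add: algebra_simps)
  then show ?thesis by (simp add: wrap_def)
qed

lemma periodic_wrap:
  fixes f :: "int \<Rightarrow> 'a"
  assumes "\<And>i. f (i + int M) = f i"
  shows "f (wrap M i) = f i"
proof -
  have "wrap M i = i + int M * (- ((i - 1) div int M))"
    using minus_mult_div_eq_mod[of "i - 1" "int M"] by (simp add: wrap_def)
  then show ?thesis using periodic_add_mult[of f, OF assms, of i "- ((i - 1) div int M)"] by simp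
qed

lemma Vh_wrap:
  assumes "v \<in> Vh M"
  shows "v (wrap M i) (wrap M j) = v i j"
  using periodic_wrap[of "\<lambda>i. v i (wrap M j)" M i] periodic_wrap[of "v i" M j]
  by (simp add: Vh_periodic_x Vh_periodic_y assms)

lemma Vh_eqI:
  assumes "v \<in> Vh M" "w \<in> Vh M" "M > 0"
    and "\<And>i j. i \<in> {1..int M} \<Longrightarrow> j \<in> {1..int M} \<Longrightarrow> v i j = w i j"
  shows "v = w"
  using assms by (metis Vh_wrap wrap_in ext)

lemma sum_periodic_shift:
  fixes f :: "int \<Rightarrow> 'a::comm_monoid_add"
  assumes "\<And>i. f (i + int M) = f i" and "M > 0"
  shows "(\<Sum>i\<in>{1..int M}. f (i + a)) = (\<Sum>i\<in>{1..int M}. f i)"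
proof -
  let ?g = "\<lambda>i. wrap M (i + a)"
  have "inj_on ?g {1..int M}"
  proof
    fix i j assume "i \<in> {1..int M}" "j \<in> {1..int M}" "?g i = ?g j"
    then have "int M dvd i - j"
      by (simp add: wrap_def mod_eq_dvd_iff)
    then show "i = j"
      using \<open>i \<in> {1..int M}\<close> \<open>j \<in> {1..int M}\<close> dvd_imp_le_int[of "i - j" "int M"]
        dvd_imp_le_int[of "j - i" "int M"] dvd_diff_commute by force
  qed
  moreover have "?g ` {1..int M} \<subseteq> {1..int M}" using wrap_in assms(2) by blast
  ultimately have "bij_betw ?g {1..int M} {1..int M}"
    by (simp add: bij_betw_def endo_inj_surj)
  then have "(\<Sum>i\<in>{1..int M}. f (?g i)) = (\<Sum>i\<in>{1..int M}. f i)"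
    by (rule sum.reindex_bij_betw)
  then show ?thesis by (simp add: periodic_wrap[of f, OF assms(1)])
qed

section \<open>Summation by parts\<close>

definition gsum :: "nat \<Rightarrow> grid \<Rightarrow> real" where
  "gsum M F = (\<Sum>i\<in>{1..int M}. \<Sum>j\<in>{1..int M}. F i j)"

lemma gsum_add: "gsum M (\<lambda>i j. F i j + G i j) = gsum M F + gsum M G"
  and gsum_diff: "gsum M (\<lambda>i j. F i j - G i j) = gsum M F - gsum M G"
  and gsum_mult: "gsum M (\<lambda>i j. c * F i j) = c * gsum M F"
  and gsum_divide: "gsum M (\<lambda>i j. F i j / c) = gsum M F / c"
  and gsum_minus: "gsum M (\<lambda>i j. - F i j) = - gsum M F"
  by (simp_all add: gsum_def sum.distrib sum_subtractf sum_distrib_left sum_divide_distrib sum_negf)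

lemma gsum_mono: "(\<And>i j. F i j \<le> G i j) \<Longrightarrow> gsum M F \<le> gsum M G"
  by (simp add: gsum_def sum_mono)

lemma gsum_cong:
  "(\<And>i j. i \<in> {1..int M} \<Longrightarrow> j \<in> {1..int M} \<Longrightarrow> F i j = G i j) \<Longrightarrow> gsum M F = gsum M G"
  by (simp add: gsum_def)

lemma gsum_point:
  assumes "i0 \<in> {1..int M}" "j0 \<in> {1..int M}"
  shows "gsum M (\<lambda>i j. if i = i0 \<and> j = j0 then F i j else 0) = F i0 j0"
proof -
  have "(\<Sum>j\<in>{1..int M}. if i = i0 \<and> j = j0 then F i j else 0) = (if i = i0 then F i j0 else 0)" for i
    using assms(2) by simp
  then show ?thesis using assms(1) by (simp add: gsum_def)
qed

lemma gsum_le_point: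
  assumes "i0 \<in> {1..int M}" "j0 \<in> {1..int M}" "\<And>i j. 0 \<le> F i j"
  shows "F i0 j0 \<le> gsum M F"
  using gsum_mono[of "\<lambda>i j. if i = i0 \<and> j = j0 then F i j else 0" F M] gsum_point[OF assms(1,2), of F]
    assms(3) by simp

lemma gsum_shift:
  assumes F: "F \<in> Vh M" and M: "M > 0"
  shows "gsum M (\<lambda>i j. F (i + a) (j + b)) = gsum M F"
proof -
  have "(\<Sum>j\<in>{1..int M}. F i (j + b)) = (\<Sum>j\<in>{1..int M}. F i j)" for i
    by (rule sum_periodic_shift[where f = "F i", OF Vh_periodic_y[OF F] M])
  moreover have "(\<Sum>i\<in>{1..int M}. \<Sum>j\<in>{1..int M}. F (i + a) j) = (\<Sum>i\<in>{1..int M}. \<Sum>j\<in>{1..int M}. F i j)"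
    by (rule sum_periodic_shift[where f = "\<lambda>i. \<Sum>j\<in>{1..int M}. F i j", OF _ M])
      (simp add: Vh_periodic_x[OF F])
  ultimately show ?thesis by (simp add: gsum_def)
qed

lemma gsum_shift_mult:
  assumes "a \<in> Vh M" "b \<in> Vh M" "M > 0"
  shows "gsum M (\<lambda>i j. a (i + p) (j + q) * b i j) = gsum M (\<lambda>i j. a i j * b (i - p) (j - q))"
proof -
  have "(\<lambda>i j. a i j * b (i - p) (j - q)) \<in> Vh M"
    using Vh_comp2[OF assms(1) Vh_shift[OF assms(2), of "- p" "- q"], of "(*)"] by simp
  from gsum_shift[OF this assms(3), of p q] show ?thesis by simp
qed

lemma gsum_Dx_mult:
  assumes a: "a \<in> Vh M" and b: "b \<in> Vh M" and M: "M > 0"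
  shows "gsum M (\<lambda>i j. Dx h a i j * b i j) = - gsum M (\<lambda>i j. a i j * Dx h b i j)"
proof -
  have "gsum M (\<lambda>i j. Dx h a i j * b i j)
      = (gsum M (\<lambda>i j. a (i + 1) j * b i j) - gsum M (\<lambda>i j. a (i - 1) j * b i j)) / (2 * h)"
    by (simp add: Dx_def gsum_divide[symmetric] gsum_diff[symmetric] left_diff_distrib)
  also have "\<dots> = (gsum M (\<lambda>i j. a i j * b (i - 1) j) - gsum M (\<lambda>i j. a i j * b (i + 1) j)) / (2 * h)"
    using gsum_shift_mult[OF a b M, where p = 1 and q = 0]
      gsum_shift_mult[OF a b M, where p = "- 1" and q = 0] by simp
  also have "\<dots> = - gsum M (\<lambda>i j. a i j * Dx h b i j)"
    by (simp add: Dx_def right_diff_distrib gsum_divide gsum_diff minus_divide_left)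
  finally show ?thesis .
qed

lemma gsum_Dy_mult:
  assumes a: "a \<in> Vh M" and b: "b \<in> Vh M" and M: "M > 0"
  shows "gsum M (\<lambda>i j. Dy h a i j * b i j) = - gsum M (\<lambda>i j. a i j * Dy h b i j)"
proof -
  have "gsum M (\<lambda>i j. Dy h a i j * b i j)
      = (gsum M (\<lambda>i j. a i (j + 1) * b i j) - gsum M (\<lambda>i j. a i (j - 1) * b i j)) / (2 * h)"
    by (simp add: Dy_def gsum_divide[symmetric] gsum_diff[symmetric] left_diff_distrib)
  also have "\<dots> = (gsum M (\<lambda>i j. a i j * b i (j - 1)) - gsum M (\<lambda>i j. a i j * b i (j + 1))) / (2 * h)"
    using gsum_shift_mult[OF a b M, where p = 0 and q = 1]
      gsum_shift_mult[OF a b M, where p = 0 and q = "- 1"] by simp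
  also have "\<dots> = - gsum M (\<lambda>i j. a i j * Dy h b i j)"
    by (simp add: Dy_def right_diff_distrib gsum_divide gsum_diff minus_divide_left)
  finally show ?thesis .
qed

lemma gsum_dxx_mult:
  assumes a: "a \<in> Vh M" and b: "b \<in> Vh M" and M: "M > 0"
  shows "gsum M (\<lambda>i j. dxx h a i j * b i j) = - gsum M (\<lambda>i j. dx_half h a i j * dx_half h b i j)"
proof -
  have "gsum M (\<lambda>i j. dxx h a i j * b i j)
      = (gsum M (\<lambda>i j. dx_half h a i j * b i j) - gsum M (\<lambda>i j. dx_half h a (i - 1) j * b i j)) / h"
    by (simp add: dxx_def gsum_divide[symmetric] gsum_diff[symmetric] left_diff_distrib)
  also have "\<dots> = (gsum M (\<lambda>i j. dx_half h a i j * b i j) - gsum M (\<lambda>i j. dx_half h a i j * b (i + 1) j)) / h"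
    using gsum_shift_mult[OF Vh_dx_half[OF a] b M, where p = "- 1" and q = 0] by simp
  also have "\<dots> = - gsum M (\<lambda>i j. dx_half h a i j * dx_half h b i j)"
    by (simp add: dx_half_def right_diff_distrib gsum_divide gsum_diff minus_divide_left)
  finally show ?thesis .
qed

lemma gsum_dyy_mult:
  assumes a: "a \<in> Vh M" and b: "b \<in> Vh M" and M: "M > 0"
  shows "gsum M (\<lambda>i j. dyy h a i j * b i j) = - gsum M (\<lambda>i j. dy_half h a i j * dy_half h b i j)"
proof -
  have "gsum M (\<lambda>i j. dyy h a i j * b i j)
      = (gsum M (\<lambda>i j. dy_half h a i j * b i j) - gsum M (\<lambda>i j. dy_half h a i (j - 1) * b i j)) / h"
    by (simp add: dyy_def gsum_divide[symmetric] gsum_diff[symmetric] left_diff_distrib)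
  also have "\<dots> = (gsum M (\<lambda>i j. dy_half h a i j * b i j) - gsum M (\<lambda>i j. dy_half h a i j * b i (j + 1))) / h"
    using gsum_shift_mult[OF Vh_dy_half[OF a] b M, where p = 0 and q = "- 1"] by simp
  also have "\<dots> = - gsum M (\<lambda>i j. dy_half h a i j * dy_half h b i j)"
    by (simp add: dy_half_def right_diff_distrib gsum_divide gsum_diff minus_divide_left)
  finally show ?thesis .
qed

lemma gsum_lap_h_mult:
  assumes "a \<in> Vh M" "b \<in> Vh M" "M > 0"
  shows "gsum M (\<lambda>i j. lap_h h a i j * b i j)
       = - gsum M (\<lambda>i j. dx_half h a i j * dx_half h b i j + dy_half h a i j * dy_half h b i j)"
  using gsum_dxx_mult[OF assms, of h] gsum_dyy_mult[OF assms, of h]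
  by (simp add: lap_h_def distrib_right gsum_add)

lemma gsum_central_diff_sq_le:
  assumes a: "a \<in> Vh M" and M: "M > 0" and h: "h \<noteq> 0"
  shows "gsum M (\<lambda>i j. (Dx h a i j)^2 + (Dy h a i j)^2)
       \<le> gsum M (\<lambda>i j. (dx_half h a i j)^2 + (dy_half h a i j)^2)"
proof -
  have sq_mean: "((x + y) / 2)^2 \<le> (x^2 + y^2) / 2" for x y :: real
    using zero_le_power2[of "x - y"] by (simp add: power2_eq_square field_simps)
  have Dx_mean: "Dx h a i j = (dx_half h a i j + dx_half h a (i - 1) j) / 2"
    and Dy_mean: "Dy h a i j = (dy_half h a i j + dy_half h a i (j - 1)) / 2" for i j
    using h by (simp_all add: Dx_def Dy_def dx_half_def dy_half_def field_simps)
  have "gsum M (\<lambda>i j. (Dx h a i j)^2 + (Dy h a i j)^2)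
      \<le> gsum M (\<lambda>i j. ((dx_half h a i j)^2 + (dx_half h a (i - 1) j)^2) / 2
                        + ((dy_half h a i j)^2 + (dy_half h a i (j - 1))^2) / 2)"
  proof (rule gsum_mono)
    fix i j
    show "(Dx h a i j)^2 + (Dy h a i j)^2 \<le> ((dx_half h a i j)^2 + (dx_half h a (i - 1) j)^2) / 2
                        + ((dy_half h a i j)^2 + (dy_half h a i (j - 1))^2) / 2"
      unfolding Dx_mean Dy_mean
      using sq_mean[of "dx_half h a i j" "dx_half h a (i - 1) j"]
        sq_mean[of "dy_half h a i j" "dy_half h a i (j - 1)"] by linarith
  qed
  also have "\<dots> = gsum M (\<lambda>i j. (dx_half h a i j)^2 + (dy_half h a i j)^2)"
    using gsum_shift[OF Vh_comp[OF Vh_dx_half[OF a], where F = "\<lambda>x. x^2"] M, where a = "- 1" and b = 0]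
      gsum_shift[OF Vh_comp[OF Vh_dy_half[OF a], where F = "\<lambda>x. x^2"] M, where a = 0 and b = "- 1"]
    by (simp add: gsum_add gsum_divide)
  finally show ?thesis .
qed

lemma gsum_central_diff_sq_le_lap_h:
  assumes e: "e \<in> Vh M" and M: "M > 0" and h: "h \<noteq> 0" and \<delta>: "\<delta> > 0"
  shows "gsum M (\<lambda>i j. (Dx h e i j)^2 + (Dy h e i j)^2)
       \<le> gsum M (\<lambda>i j. \<delta> * (lap_h h e i j)^2 + (e i j)^2 / (4 * \<delta>))"
proof -
  have young: "- (x * y) \<le> \<delta> * x^2 + y^2 / (4 * \<delta>)" for x y :: real
  proof -
    have "0 \<le> (2 * \<delta> * x + y)^2 / (4 * \<delta>)" using \<delta> by simp
    also have "\<dots> = \<delta> * x^2 + x * y + y^2 / (4 * \<delta>)"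
      using \<delta> by (simp add: field_simps power2_eq_square)
    finally show ?thesis by linarith
  qed
  have "gsum M (\<lambda>i j. (Dx h e i j)^2 + (Dy h e i j)^2)
      \<le> gsum M (\<lambda>i j. (dx_half h e i j)^2 + (dy_half h e i j)^2)"
    by (rule gsum_central_diff_sq_le[OF e M h])
  also have "\<dots> = gsum M (\<lambda>i j. - (lap_h h e i j * e i j))"
    using gsum_lap_h_mult[OF e e M, of h] by (simp add: gsum_minus power2_eq_square)
  also have "\<dots> \<le> gsum M (\<lambda>i j. \<delta> * (lap_h h e i j)^2 + (e i j)^2 / (4 * \<delta>))"
    by (intro gsum_mono young)
  finally show ?thesis .
qed

lemma gsum_lap_h_mult_commute:
  assumes "a \<in> Vh M" "b \<in> Vh M" "M > 0"
  shows "gsum M (\<lambda>i j. lap_h h a i j * b i j) = gsum M (\<lambda>i j. a i j * lap_h h b i j)"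
  using gsum_lap_h_mult[OF assms, of h] gsum_lap_h_mult[OF assms(2,1,3), of h]
  by (simp add: mult.commute)

lemma gsum_div_h_mult:
  assumes "(\<lambda>i j. fst (F i j)) \<in> Vh M" "(\<lambda>i j. snd (F i j)) \<in> Vh M" "e \<in> Vh M" "M > 0"
  shows "gsum M (\<lambda>i j. div_h h F i j * e i j) = - gsum M (\<lambda>i j. F i j \<bullet> grad_h h e i j)"
  using gsum_Dx_mult[OF assms(1,3,4), of h] gsum_Dy_mult[OF assms(2,3,4), of h]
  by (simp add: div_h_def grad_h_def inner_prod_def distrib_right gsum_add)

section \<open>The energy of one time step\<close>

definition residual :: "real \<Rightarrow> real \<Rightarrow> real \<Rightarrow> grid \<Rightarrow> grid \<Rightarrow> grid" where
  "residual h \<delta> b0 c w i j = b0 * w i j + c i j + \<delta> * lap_h h (lap_h h w) i j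
     - div_h h (\<lambda>a b. fnl (grad_h h w a b)) i j"

definition weak_form :: "real \<Rightarrow> real \<Rightarrow> real \<Rightarrow> grid \<Rightarrow> grid \<Rightarrow> grid \<Rightarrow> grid" where
  "weak_form h \<delta> b0 c w e i j = (b0 * w i j + c i j) * e i j + \<delta> * lap_h h w i j * lap_h h e i j
     + fnl (grad_h h w i j) \<bullet> grad_h h e i j"

definition energy :: "nat \<Rightarrow> real \<Rightarrow> real \<Rightarrow> real \<Rightarrow> grid \<Rightarrow> grid \<Rightarrow> real" where
  "energy M h \<delta> b0 c w = gsum M (\<lambda>i j. b0 / 2 * (w i j)^2 + c i j * w i j
     + \<delta> / 2 * (lap_h h w i j)^2 + ((Dx h w i j)^2 + (Dy h w i j)^2 - 1)^2 / 4)"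

lemma gsum_residual_mult:
  assumes w: "w \<in> Vh M" and e: "e \<in> Vh M" and M: "M > 0"
  shows "gsum M (\<lambda>i j. residual h \<delta> b0 c w i j * e i j) = gsum M (weak_form h \<delta> b0 c w e)"
proof -
  have "(\<lambda>i j. fst (fnl (grad_h h w i j))) \<in> Vh M" "(\<lambda>i j. snd (fnl (grad_h h w i j))) \<in> Vh M"
    using Vh_comp2[OF Vh_Dx[OF w] Vh_Dy[OF w], of "\<lambda>x y. fst (fnl (x, y))" h h]
      Vh_comp2[OF Vh_Dx[OF w] Vh_Dy[OF w], of "\<lambda>x y. snd (fnl (x, y))" h h]
    by (simp_all add: grad_h_def)
  note by_parts = gsum_div_h_mult[OF this e M, of h]
    gsum_lap_h_mult_commute[OF Vh_lap_h[OF w, of h] e M, of h]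
  have "gsum M (\<lambda>i j. residual h \<delta> b0 c w i j * e i j)
      = gsum M (\<lambda>i j. (b0 * w i j + c i j) * e i j + \<delta> * (lap_h h (lap_h h w) i j * e i j)
          - div_h h (\<lambda>a b. fnl (grad_h h w a b)) i j * e i j)"
    by (simp add: residual_def algebra_simps)
  also have "\<dots> = gsum M (\<lambda>i j. (b0 * w i j + c i j) * e i j)
      + \<delta> * gsum M (\<lambda>i j. lap_h h (lap_h h w) i j * e i j)
      - gsum M (\<lambda>i j. div_h h (\<lambda>a b. fnl (grad_h h w a b)) i j * e i j)"
    by (simp only: gsum_add gsum_diff gsum_mult)
  also have "\<dots> = gsum M (\<lambda>i j. (b0 * w i j + c i j) * e i j)
      + \<delta> * gsum M (\<lambda>i j. lap_h h w i j * lap_h h e i j)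
      + gsum M (\<lambda>i j. fnl (grad_h h w i j) \<bullet> grad_h h e i j)"
    by (simp only: by_parts diff_minus_eq_add)
  also have "\<dots> = gsum M (weak_form h \<delta> b0 c w e)"
    by (simp add: weak_form_def[abs_def] gsum_add gsum_mult mult.assoc)
  finally show ?thesis .
qed

lemma Dx_add_scaled: "Dx h (\<lambda>i j. v i j + s * w i j) i j = Dx h v i j + s * Dx h w i j"
  and Dy_add_scaled: "Dy h (\<lambda>i j. v i j + s * w i j) i j = Dy h v i j + s * Dy h w i j"
  and lap_h_add_scaled: "lap_h h (\<lambda>i j. v i j + s * w i j) i j = lap_h h v i j + s * lap_h h w i j"
  by (cases "h = 0";
      simp add: Dx_def Dy_def lap_h_def dxx_def dyy_def dx_half_def dy_half_def field_simps)+

lemma Dx_diff: "Dx h (\<lambda>i j. v i j - w i j) i j = Dx h v i j - Dx h w i j"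
  and Dy_diff: "Dy h (\<lambda>i j. v i j - w i j) i j = Dy h v i j - Dy h w i j"
  and lap_h_diff: "lap_h h (\<lambda>i j. v i j - w i j) i j = lap_h h v i j - lap_h h w i j"
  by (cases "h = 0";
      simp add: Dx_def Dy_def lap_h_def dxx_def dyy_def dx_half_def dy_half_def field_simps)+

lemma energy_density_deriv:
  "((\<lambda>s. b0 / 2 * (x + s * y)^2 + c * (x + s * y) + \<delta> / 2 * (a + s * b)^2
        + ((p + s * q)^2 + (r + s * z)^2 - 1)^2 / 4)
    has_real_derivative (b0 * x + c) * y + \<delta> * a * b + fnl (p, r) \<bullet> (q, z)) (at 0)"
  by (auto intro!: derivative_eq_intros simp: fnl_def field_simps power2_eq_square)

lemma energy_directional_deriv:
  "((\<lambda>s. energy M h \<delta> b0 c (\<lambda>i j. w i j + s * e i j))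
     has_real_derivative gsum M (weak_form h \<delta> b0 c w e)) (at 0)"
  unfolding energy_def gsum_def weak_form_def grad_h_def Dx_add_scaled Dy_add_scaled lap_h_add_scaled
  by (intro DERIV_sum energy_density_deriv)

lemma energy_coercive:
  assumes "b0 > 0" "\<delta> \<ge> 0" "i0 \<in> {1..int M}" "j0 \<in> {1..int M}"
  shows "b0 / 4 * (w i0 j0)^2 - gsum M (\<lambda>i j. (c i j)^2 / b0) \<le> energy M h \<delta> b0 c w"
proof -
  have quad: "b0 / 4 * x^2 - y^2 / b0 \<le> b0 / 2 * x^2 + y * x" for x y :: real
  proof -
    have "0 \<le> (b0 * x + 2 * y)^2 / (4 * b0)" using assms(1) by simp
    also have "\<dots> = b0 / 4 * x^2 + y * x + y^2 / b0"
      using assms(1) by (simp add: field_simps power2_eq_square)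
    finally show ?thesis by linarith
  qed
  have "b0 / 4 * (w i0 j0)^2 - gsum M (\<lambda>i j. (c i j)^2 / b0)
      = gsum M (\<lambda>i j. (if i = i0 \<and> j = j0 then b0 / 4 * (w i j)^2 else 0) - (c i j)^2 / b0)"
    by (simp add: gsum_diff gsum_point[OF assms(3,4)])
  also have "\<dots> \<le> energy M h \<delta> b0 c w"
    unfolding energy_def
  proof (rule gsum_mono)
    fix i j
    show "(if i = i0 \<and> j = j0 then b0 / 4 * (w i j)^2 else 0) - (c i j)^2 / b0
        \<le> b0 / 2 * (w i j)^2 + c i j * w i j + \<delta> / 2 * (lap_h h w i j)^2
          + ((Dx h w i j)^2 + (Dy h w i j)^2 - 1)^2 / 4"
    proof -
      have "(if i = i0 \<and> j = j0 then b0 / 4 * (w i j)^2 else 0) \<le> b0 / 4 * (w i j)^2"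
        using assms(1) by simp
      moreover have "0 \<le> \<delta> / 2 * (lap_h h w i j)^2" using assms(2) by simp
      moreover have "0 \<le> ((Dx h w i j)^2 + (Dy h w i j)^2 - 1)^2 / 4" by simp
      ultimately show ?thesis using quad[of "w i j" "c i j"] by linarith
    qed
  qed
  finally show ?thesis .
qed

section \<open>Existence by minimisation\<close>

definition periodic_extension :: "nat \<Rightarrow> (int \<times> int \<Rightarrow> real) \<Rightarrow> grid" where
  "periodic_extension M c i j = c (wrap M i, wrap M j)"

lemma Vh_periodic_extension: "periodic_extension M c \<in> Vh M"
  by (intro VhI) (simp_all add: periodic_extension_def wrap_add_period)

lemma periodic_extension_Vh: "v \<in> Vh M \<Longrightarrow> periodic_extension M (\<lambda>(i, j). v i j) = v"
  by (simp add: fun_eq_iff periodic_extension_def Vh_wrap)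

lemma continuous_on_coordinate [continuous_intros]: "continuous_on S (\<lambda>c. c k)"
  by (rule continuous_on_product_then_coordinatewise[OF continuous_on_id])

lemma continuous_on_energy_periodic_extension:
  "h \<noteq> 0 \<Longrightarrow> continuous_on S (\<lambda>c. energy M h \<delta> b0 f (periodic_extension M c))"
  unfolding energy_def gsum_def periodic_extension_def
    lap_h_def dxx_def dyy_def dx_half_def dy_half_def Dx_def Dy_def
  by (intro continuous_intros) auto

lemma compact_box: "compact (Pi\<^sub>E UNIV (\<lambda>_::'a. {a..b::real}))"
  using compactin_PiE[of "\<lambda>_. euclidean" UNIV "\<lambda>_::'a. {a..b::real}"]
  by (simp add: euclidean_product_topology)

lemma energy_attains_min:
  assumes M: "M > 0" and h: "h \<noteq> 0" and \<delta>: "\<delta> \<ge> 0" and b0: "b0 > 0"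
  shows "\<exists>w\<in>Vh M. \<forall>v\<in>Vh M. energy M h \<delta> b0 c w \<le> energy M h \<delta> b0 c v"
proof -
  let ?E = "energy M h \<delta> b0 c"
  define K where "K = gsum M (\<lambda>i j. (c i j)^2 / b0)"
  \<comment> \<open>Outside the box of half-width R the energy exceeds E(0); inside, the box is compact
     in the product topology (Tychonoff) and a minimiser exists.\<close>
  define R where "R = 4 * (\<bar>?E (\<lambda>_ _. 0)\<bar> + \<bar>K\<bar>) / b0 + 1"
  have "R \<ge> 1" using b0 by (simp add: R_def)
  have outside: "?E (\<lambda>_ _. 0) < ?E v"
    if "i \<in> {1..int M}" "j \<in> {1..int M}" "\<bar>v i j\<bar> > R" for v i j
  proof -
    have "R < (v i j)^2"
      using \<open>R \<ge> 1\<close> \<open>\<bar>v i j\<bar> > R\<close> mult_strict_mono'[of R "\<bar>v i j\<bar>" 1 "\<bar>v i j\<bar>"]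
      by (simp add: power2_eq_square)
    then have "\<bar>?E (\<lambda>_ _. 0)\<bar> + \<bar>K\<bar> < b0 / 4 * (v i j)^2"
      using b0 by (simp add: R_def field_simps)
    then show ?thesis using energy_coercive[OF b0 \<delta> that(1,2), of v c h] by (simp add: K_def)
  qed
  define B where "B = Pi\<^sub>E UNIV (\<lambda>_::int \<times> int. {- R..R})"
  have "(\<lambda>_. 0) \<in> B" using \<open>R \<ge> 1\<close> by (simp add: B_def PiE_iff)
  have "\<exists>cmin\<in>B. \<forall>c\<in>B. ?E (periodic_extension M cmin) \<le> ?E (periodic_extension M c)"
    unfolding B_def
    by (rule continuous_attains_inf[OF compact_box _ continuous_on_energy_periodic_extension[OF h]])
      (use \<open>(\<lambda>_. 0) \<in> B\<close> B_def in blast)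
  then obtain cmin
    where cmin: "\<And>c. c \<in> B \<Longrightarrow> ?E (periodic_extension M cmin) \<le> ?E (periodic_extension M c)"
    by blast
  have "?E (periodic_extension M cmin) \<le> ?E v" if v: "v \<in> Vh M" for v
  proof (cases "\<forall>i\<in>{1..int M}. \<forall>j\<in>{1..int M}. \<bar>v i j\<bar> \<le> R")
    case True
    then have "v i j \<in> {- R..R}" for i j
      using Vh_wrap[OF v, of i j] wrap_in[OF M] by (metis abs_le_iff atLeastAtMost_iff minus_le_iff)
    then have "(\<lambda>(i, j). v i j) \<in> B" by (auto simp: B_def PiE_iff)
    from cmin[OF this] show ?thesis by (simp add: periodic_extension_Vh[OF v])
  next
    case False
    then obtain i j where "i \<in> {1..int M}" "j \<in> {1..int M}" "\<bar>v i j\<bar> > R"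
      by (auto simp: not_le)
    then have "?E (\<lambda>_ _. 0) < ?E v" by (rule outside)
    moreover have "?E (periodic_extension M cmin) \<le> ?E (\<lambda>_ _. 0)"
      using cmin[OF \<open>(\<lambda>_. 0) \<in> B\<close>] by (simp add: periodic_extension_def[abs_def])
    ultimately show ?thesis by simp
  qed
  then show ?thesis using Vh_periodic_extension by blast
qed

lemma residual_zero_at_min:
  assumes w: "w \<in> Vh M" and M: "M > 0"
    and min: "\<And>v. v \<in> Vh M \<Longrightarrow> energy M h \<delta> b0 c w \<le> energy M h \<delta> b0 c v"
    and i0: "i0 \<in> {1..int M}" and j0: "j0 \<in> {1..int M}"
  shows "residual h \<delta> b0 c w i0 j0 = 0"
proof -
  define e :: grid where "e i j = (if wrap M i = i0 \<and> wrap M j = j0 then 1 else 0)" for i j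
  have e: "e \<in> Vh M" by (intro VhI) (simp_all add: e_def wrap_add_period)
  have "(\<lambda>i j. w i j + s * e i j) \<in> Vh M" for s
    using Vh_comp2[OF w e, of "\<lambda>x y. x + s * y"] by simp
  then have "\<forall>s. \<bar>0 - s\<bar> < 1 \<longrightarrow> energy M h \<delta> b0 c (\<lambda>i j. w i j + 0 * e i j)
                            \<le> energy M h \<delta> b0 c (\<lambda>i j. w i j + s * e i j)"
    using min by simp
  then have "gsum M (weak_form h \<delta> b0 c w e) = 0"
    by (rule DERIV_local_min[OF energy_directional_deriv zero_less_one])
  then have "gsum M (\<lambda>i j. residual h \<delta> b0 c w i j * e i j) = 0"
    by (simp add: gsum_residual_mult[OF w e M])
  moreover have "gsum M (\<lambda>i j. residual h \<delta> b0 c w i j * e i j)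
      = gsum M (\<lambda>i j. if i = i0 \<and> j = j0 then residual h \<delta> b0 c w i j else 0)"
    by (rule gsum_cong) (simp add: e_def wrap_id)
  ultimately show ?thesis by (simp add: gsum_point[OF i0 j0])
qed

lemma residual_solvable:
  assumes "M > 0" "h \<noteq> 0" "\<delta> \<ge> 0" "b0 > 0"
  shows "\<exists>w\<in>Vh M. \<forall>i\<in>{1..int M}. \<forall>j\<in>{1..int M}. residual h \<delta> b0 c w i j = 0"
  using energy_attains_min[OF assms, of c] residual_zero_at_min[OF _ assms(1)] by metis

section \<open>Uniqueness\<close>

lemma fnl_monotone: "(fnl p - fnl q) \<bullet> (p - q) \<ge> - ((norm (p - q))^2)"
proof (cases p, cases q)
  fix p1 p2 q1 q2 assume pq: "p = (p1, p2)" "q = (q1, q2)"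
  have "(norm (p - q))^2 = (p1 - q1)^2 + (p2 - q2)^2" by (simp add: pq norm_Pair)
  then have "(fnl p - fnl q) \<bullet> (p - q) + (norm (p - q))^2
      = ((p1^2 + p2^2 - (q1^2 + q2^2))^2 + (p1^2 + p2^2 + q1^2 + q2^2) * ((p1 - q1)^2 + (p2 - q2)^2)) / 2"
    by (simp add: pq fnl_def norm_Pair field_simps power2_eq_square)
  also have "\<dots> \<ge> 0" by (intro divide_nonneg_pos add_nonneg_nonneg mult_nonneg_nonneg) auto
  finally show ?thesis by linarith
qed

lemma norm_grad_h_sq: "(norm (grad_h h v i j))^2 = (Dx h v i j)^2 + (Dy h v i j)^2"
  by (simp add: grad_h_def norm_Pair)

lemma residual_zero_unique:
  assumes M: "M > 0" and h: "h \<noteq> 0" and \<delta>: "\<delta> > 0" and b0: "1 < 4 * \<delta> * b0"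
    and w1: "w1 \<in> Vh M" and w2: "w2 \<in> Vh M"
    and res1: "\<forall>i\<in>{1..int M}. \<forall>j\<in>{1..int M}. residual h \<delta> b0 c w1 i j = 0"
    and res2: "\<forall>i\<in>{1..int M}. \<forall>j\<in>{1..int M}. residual h \<delta> b0 c w2 i j = 0"
  shows "w1 = w2"
proof -
  define e where "e = (\<lambda>i j. w1 i j - w2 i j)"
  have e: "e \<in> Vh M" unfolding e_def by (rule Vh_comp2[OF w1 w2])
  have residual_orth: "gsum M (\<lambda>i j. residual h \<delta> b0 c w i j * e i j) = 0"
    if "\<forall>i\<in>{1..int M}. \<forall>j\<in>{1..int M}. residual h \<delta> b0 c w i j = 0" for w
    using gsum_cong[of M _ "\<lambda>_ _. 0"] that by (simp add: gsum_def)
  have weak_diff_zero: "gsum M (\<lambda>i j. weak_form h \<delta> b0 c w1 e i j - weak_form h \<delta> b0 c w2 e i j) = 0"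
    using residual_orth[OF res1] residual_orth[OF res2]
    by (simp add: gsum_diff gsum_residual_mult[OF w1 e M] gsum_residual_mult[OF w2 e M])
  have weak_diff_ge: "gsum M (\<lambda>i j. b0 * (e i j)^2 + \<delta> * (lap_h h e i j)^2 - (norm (grad_h h e i j))^2)
      \<le> gsum M (\<lambda>i j. weak_form h \<delta> b0 c w1 e i j - weak_form h \<delta> b0 c w2 e i j)"
  proof (rule gsum_mono)
    fix i j
    have grad_e: "grad_h h e i j = grad_h h w1 i j - grad_h h w2 i j"
      by (simp add: e_def grad_h_def Dx_diff Dy_diff)
    have "weak_form h \<delta> b0 c w1 e i j - weak_form h \<delta> b0 c w2 e i j
        = b0 * (e i j)^2 + \<delta> * (lap_h h e i j)^2
          + (fnl (grad_h h w1 i j) - fnl (grad_h h w2 i j)) \<bullet> grad_h h e i j"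
      by (simp add: weak_form_def e_def lap_h_diff inner_diff_left algebra_simps power2_eq_square)
    then show "b0 * (e i j)^2 + \<delta> * (lap_h h e i j)^2 - (norm (grad_h h e i j))^2
        \<le> weak_form h \<delta> b0 c w1 e i j - weak_form h \<delta> b0 c w2 e i j"
      using fnl_monotone[of "grad_h h w1 i j" "grad_h h w2 i j"] by (simp add: grad_e)
  qed
  have grad_bound: "gsum M (\<lambda>i j. (norm (grad_h h e i j))^2)
      \<le> gsum M (\<lambda>i j. \<delta> * (lap_h h e i j)^2 + (e i j)^2 / (4 * \<delta>))"
    using gsum_central_diff_sq_le_lap_h[OF e M h \<delta>] by (simp add: norm_grad_h_sq)
  have le0: "gsum M (\<lambda>i j. (b0 - 1 / (4 * \<delta>)) * (e i j)^2) \<le> 0"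
    using weak_diff_zero weak_diff_ge grad_bound
    by (simp add: gsum_diff gsum_add gsum_divide gsum_mult left_diff_distrib)
  have pos: "0 < b0 - 1 / (4 * \<delta>)" using b0 \<delta> by (simp add: field_simps)
  have "e i j = 0" if "i \<in> {1..int M}" "j \<in> {1..int M}" for i j
  proof -
    have "(b0 - 1 / (4 * \<delta>)) * (e i j)^2 \<le> 0"
      using gsum_le_point[OF that, of "\<lambda>i j. (b0 - 1 / (4 * \<delta>)) * (e i j)^2"] pos le0 by simp
    with pos show ?thesis by (simp add: mult_le_0_iff)
  qed
  then show ?thesis by (intro Vh_eqI[OF w1 w2 M]) (simp add: e_def)
qed

section \<open>The BDF2 step\<close>

lemma D2_update:
  assumes "1 \<le> n"
  shows "D2 t (u(n := w)) n i j = bker t n 0 * w i j + D2 t (u(n := (\<lambda>_ _. 0))) n i j"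
proof -
  have "D2 t (u(n := w)) n i j = (\<Sum>k = 1..n. (if k = n then bker t n (n - k) * w i j else 0)
      + bker t n (n - k) * ((u(n := (\<lambda>_ _. 0))) k i j - (u(n := (\<lambda>_ _. 0))) (k - 1) i j))"
    unfolding D2_def by (rule sum.cong) (auto simp: algebra_simps)
  also have "\<dots> = bker t n 0 * w i j + D2 t (u(n := (\<lambda>_ _. 0))) n i j"
    unfolding D2_def sum.distrib using assms by simp
  finally show ?thesis .
qed

lemma scheme_at_iff_residual:
  assumes "1 \<le> n"
  shows "scheme_at L M \<delta> t (u(n := w)) n \<longleftrightarrow>
    (\<forall>i\<in>{1..int M}. \<forall>j\<in>{1..int M}.
       residual (L / real M) \<delta> (bker t n 0) (D2 t (u(n := (\<lambda>_ _. 0))) n) w i j = 0)"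
  unfolding scheme_at_def Let_def residual_def D2_update[OF assms, of t u w] by simp

lemma step_bound_imp_bker_0:
  assumes n: "1 \<le> n" and t_mono: "\<And>k. 1 \<le> k \<Longrightarrow> k \<le> n \<Longrightarrow> t (k - 1) < t k"
    and \<delta>: "\<delta> > 0" and step: "tau t n < 4 * \<delta> * (1 + 2 * ratio t n) / (1 + ratio t n)"
  shows "1 < 4 * \<delta> * bker t n 0"
proof -
  have tau: "tau t k > 0" if "1 \<le> k" "k \<le> n" for k
    using t_mono[OF that] by (simp add: tau_def)
  have r: "0 < 1 + ratio t n"
  proof (cases "n \<ge> 2")
    case True
    then have "tau t (n - 1) > 0" by (intro tau) auto
    with True n tau[of n] show ?thesis by (simp add: ratio_def add_pos_nonneg)
  qed (simp add: ratio_def)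
  with step have "tau t n * (1 + ratio t n) < 4 * \<delta> * (1 + 2 * ratio t n)"
    by (simp add: less_divide_eq)
  then have "1 < 4 * \<delta> * ((1 + 2 * ratio t n) / (tau t n * (1 + ratio t n)))"
    using tau[OF n order.refl] r by (simp add: less_divide_eq)
  also have "\<dots> \<le> 4 * \<delta> * bker t n 0"
  proof (cases "n = 1")
    case True
    then have "ratio t n = 0" by (simp add: ratio_def)
    with True tau[OF n order.refl] \<delta> show ?thesis by (simp add: bker_def divide_right_mono)
  qed (use n in \<open>simp add: bker_def\<close>)
  finally show ?thesis .
qed

theorem theorem2p1:
  fixes L \<delta> T r_s :: real and M N :: nat and t :: "nat \<Rightarrow> real"
  assumes L_pos: "L > 0" and M_pos: "M > 0" and delta_pos: "\<delta> > 0"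
    and rs_pos: "0 < r_s" and rs_bound: "r_s < 4.864"
    and t0: "t 0 = 0" and tN: "t N = T"
    and t_mono: "\<And>k. 1 \<le> k \<Longrightarrow> k \<le> N \<Longrightarrow> t (k - 1) < t k"
    and ratio_bound: "\<And>k. 2 \<le> k \<Longrightarrow> k \<le> N \<Longrightarrow> ratio t k \<le> r_s"
    and step_bound: "\<And>k. 1 \<le> k \<Longrightarrow> k \<le> N \<Longrightarrow>
                       tau t k < 4 * \<delta> * (1 + 2 * ratio t k) / (1 + ratio t k)"
  shows "\<forall>n. 1 \<le> n \<and> n \<le> N \<longrightarrow>
           (\<forall>u :: nat \<Rightarrow> grid. (\<forall>k < n. u k \<in> Vh M) \<longrightarrow>
              (\<exists>!w. w \<in> Vh M \<and> scheme_at L M \<delta> t (u(n := w)) n))"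
proof (intro allI impI)
  fix n :: nat and u :: "nat \<Rightarrow> grid"
  assume n: "1 \<le> n \<and> n \<le> N"
  define h where "h = L / real M"
  define b0 where "b0 = bker t n 0"
  define c where "c = D2 t (u(n := (\<lambda>_ _. 0))) n"
  have b0: "1 < 4 * \<delta> * b0"
    unfolding b0_def using n t_mono step_bound delta_pos by (intro step_bound_imp_bker_0) auto
  have h: "h \<noteq> 0" using L_pos M_pos by (simp add: h_def)
  have scheme: "scheme_at L M \<delta> t (u(n := w)) n \<longleftrightarrow>
      (\<forall>i\<in>{1..int M}. \<forall>j\<in>{1..int M}. residual h \<delta> b0 c w i j = 0)" for w
    using scheme_at_iff_residual[of n] n by (simp add: h_def b0_def c_def)
  have "b0 > 0" using b0 delta_pos by (smt (verit) mult_nonneg_nonpos)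
  then obtain w where "w \<in> Vh M" "\<forall>i\<in>{1..int M}. \<forall>j\<in>{1..int M}. residual h \<delta> b0 c w i j = 0"
    using residual_solvable[OF M_pos h less_imp_le[OF delta_pos], of b0 c] by blast
  then show "\<exists>!w. w \<in> Vh M \<and> scheme_at L M \<delta> t (u(n := w)) n"
    using residual_zero_unique[OF M_pos h delta_pos b0] scheme by blast
qed

end
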